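(* Let $3\le d\le 50$, let $(\alpha,\beta)\in\mathcal{A}_d$, let $\ell>1000$ be a prime, and let $(y_1,y_2)$ be integers satisfying \[ 4\beta y_2^\ell-\alpha^2 y_1^{2\ell}=d^2-1 . \] Suppose $|y_1|\ge 2$, $y_2\ge 2$ and $y_2\ne y_1^2$. Let $\alpha_1=4\beta/\alpha^2$ and $\alpha_2=y_1^2/y_2$. Then $\alpha_1$ and $\alpha_2$ are positive and multiplicatively independent. Moreover, writing $\Lambda=\log\alpha_1-\ell\log\alpha_2$, we have \[ 0<\Lambda<\frac{d^2-1}{\alpha^2 y_1^{2\ell}} . \]
   Context: For a prime $q$ let $\mu_q=\operatorname{ord}_q(d^2-1)$ and $\nu_q=\operatorname{ord}_q(d)$. To each prime $q$ associate a finite set $T_q\subset\mathbb{Z}^2$: if $q\nmid d(d^2-1)$, $T_q=\{(0,0)\}$. For $q=2$: $T_2=\{(0,1-\nu_2)\}$ if $2\mid d$; $T_2=\{(1,0),(\mu_2/2,1-\mu_2/2),(3-\mu_2,\mu_2-2)\}$ if $2\nmid d$ and $\mu_2$ is even; $T_2=\{(1,0),(3-\mu_2,\mu_2-2)\}$ if $2\nmid d$ and $\mu_2$ is odd. For odd $q\mid d$: $T_q=\{(-\nu_q,0),(0,-\nu_q)\}$. For odd $q\mid d^2-1$: $T_q=\{(0,0),(-\mu_q,\mu_q),(\mu_q/2,-\mu_q/2)\}$ if $\mu_q$ is even, and $T_q=\{(0,0),(-\mu_q,\mu_q)\}$ if $\mu_q$ is odd. Then $\mathcal{A}_d$ is the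 set of pairs of positive rationals $(\alpha,\beta)$ with $(\operatorname{ord}_q(\alpha),\operatorname{ord}_q(\beta))\in T_q$ for every prime $q$. *)

theory Defs
  imports "HOL-Computational_Algebra.Computational_Algebra"
begin

definition ordz :: "nat \<Rightarrow> int \<Rightarrow> int" where
  "ordz q n = int (multiplicity (int q) n)"

definition ordq :: "nat \<Rightarrow> rat \<Rightarrow> int" where
  "ordq q r = (case quotient_of r of (a, b) \<Rightarrow> ordz q a - ordz q b)"

definition Tset :: "int \<Rightarrow> nat \<Rightarrow> (int \<times> int) set" where
  "Tset d q =
    (let mu = ordz q (d^2 - 1); nu = ordz q d in
     if \<not> (int q dvd d * (d^2 - 1)) then {(0, 0)}
     else if q = 2 then
       (if 2 dvd d then {(0, 1 - nu)}
        else if even mu then {(1, 0), (mu div 2, 1 - mu div 2), (3 - mu, mu - 2)}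
        else {(1, 0), (3 - mu, mu - 2)})
     else if int q dvd d then {(-nu, 0), (0, -nu)}
     else if even mu then {(0, 0), (-mu, mu), (mu div 2, -(mu div 2))}
     else {(0, 0), (-mu, mu)})"

definition Aset :: "int \<Rightarrow> (rat \<times> rat) set" where
  "Aset d = {(a, b). a > 0 \<and> b > 0 \<and>
     (\<forall>q. prime q \<longrightarrow> (ordq q a, ordq q b) \<in> Tset d q)}"

definition mult_indep :: "rat \<Rightarrow> rat \<Rightarrow> bool" where
  "mult_indep x y \<longleftrightarrow> (\<forall>m n :: int. x powi m * y powi n = 1 \<longrightarrow> m = 0 \<and> n = 0)"

end

theory Submission
  imports Defs
begin

text \<open>
  Since \<open>\<alpha>\<^sub>1 / \<alpha>\<^sub>2\<^sup>\<ell> = 1 + (d\<^sup>2 - 1) / (\<alpha>\<^sup>2 y\<^sub>1\<^sup>2\<^sup>\<ell>)\<close>, we have \<open>\<Lambda> = ln (1 + x)\<close> with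
  \<open>x = (d\<^sup>2 - 1) / (\<alpha>\<^sup>2 y\<^sub>1\<^sup>2\<^sup>\<ell>)\<close>, whence \<open>0 < \<Lambda> < x\<close>. The valuations in \<open>T\<^sub>q\<close> force
  \<open>\<alpha> \<ge> 1 / (d (d\<^sup>2 - 1))\<close>, so \<open>x\<close> is astronomically small, in particular
  \<open>x < 1 / (2 y\<^sub>1\<^sup>2) \<le> |ln \<alpha>\<^sub>2|\<close>. If \<open>\<alpha>\<^sub>1\<^sup>m \<alpha>\<^sub>2\<^sup>n = 1\<close>, comparing \<open>q\<close>-adic valuations at a
  prime where \<open>\<alpha>\<^sub>2\<close> is not a unit gives \<open>|n| \<le> 35 |m|\<close>, because all valuations of \<open>\<alpha>\<^sub>1\<close> are
  at most 35 in absolute value. Then \<open>m \<Lambda> = -(n + \<ell> m) ln \<alpha>\<^sub>2\<close> with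
  \<open>|n + \<ell> m| \<ge> |m|\<close>, which contradicts \<open>\<Lambda> < |ln \<alpha>\<^sub>2|\<close> unless \<open>m = n = 0\<close>.
\<close>

lemma rat_as_int_fraction:
  fixes r :: rat
  obtains a b :: int where "b > 0" "r = of_int a / of_int b"
proof -
  obtain a b where qo: "quotient_of r = (a, b)" by (cases "quotient_of r") auto
  from quotient_of_denom_pos[OF qo] quotient_of_div[OF qo] show ?thesis by (rule that)
qed

lemma ordq_of_int_divide:
  assumes "prime q" "a \<noteq> 0" "b \<noteq> 0"
  shows "ordq q (of_int a / of_int b) = ordz q a - ordz q b"
proof -
  obtain a' b' where qo: "quotient_of (of_int a / of_int b) = (a', b')"
    by (cases "quotient_of (of_int a / of_int b)") auto
  have b'_pos: "b' > 0" using quotient_of_denom_pos[OF qo] .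
  have "(of_int a / of_int b :: rat) = of_int a' / of_int b'" using quotient_of_div[OF qo] .
  hence "of_int a * of_int b' = (of_int a' * of_int b :: rat)"
    using assms b'_pos by (simp add: frac_eq_eq)
  hence cross: "a * b' = a' * b" by (metis of_int_eq_iff of_int_mult)
  have "a' \<noteq> 0" using cross assms b'_pos by auto
  have "multiplicity (int q) (a * b') = multiplicity (int q) (a' * b)" using cross by simp
  hence "multiplicity (int q) a + multiplicity (int q) b' = multiplicity (int q) a' + multiplicity (int q) b"
    using assms b'_pos \<open>a' \<noteq> 0\<close> by (simp add: prime_elem_multiplicity_mult_distrib)
  thus ?thesis unfolding ordq_def ordz_def qo by simp
qed

lemma ordq_of_int: "prime q \<Longrightarrow> a \<noteq> 0 \<Longrightarrow> ordq q (of_int a) = ordz q a"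
  using ordq_of_int_divide[of q a 1] by (simp add: ordz_def)

lemma ordq_1: "prime q \<Longrightarrow> ordq q 1 = 0"
  using ordq_of_int[of q 1] by (simp add: ordz_def)

lemma ordq_mult:
  assumes "prime q" "r \<noteq> 0" "s \<noteq> 0"
  shows "ordq q (r * s) = ordq q r + ordq q s"
proof -
  obtain a b where ab: "b > 0" "r = of_int a / of_int b" by (rule rat_as_int_fraction)
  obtain c e where ce: "e > 0" "s = of_int c / of_int e" by (rule rat_as_int_fraction)
  have nz: "a \<noteq> 0" "c \<noteq> 0" using assms ab ce by auto
  have "r * s = of_int (a * c) / of_int (b * e)" using ab ce by simp
  hence "ordq q (r * s) = ordz q (a * c) - ordz q (b * e)"
    using ordq_of_int_divide[of q "a * c" "b * e"] assms ab ce nz by simp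
  also have "\<dots> = (ordz q a - ordz q b) + (ordz q c - ordz q e)"
    using ab ce nz assms(1) by (simp add: ordz_def prime_elem_multiplicity_mult_distrib)
  finally show ?thesis using ordq_of_int_divide assms ab ce nz by simp
qed

lemma ordq_inverse:
  assumes "prime q" "r \<noteq> 0"
  shows "ordq q (inverse r) = - ordq q r"
proof -
  obtain a b where ab: "b > 0" "r = of_int a / of_int b" by (rule rat_as_int_fraction)
  have "a \<noteq> 0" using assms ab by auto
  moreover have "inverse r = of_int b / of_int a" using ab by simp
  ultimately show ?thesis using ordq_of_int_divide assms ab by simp
qed

lemma ordq_power:
  assumes "prime q" "r \<noteq> 0"
  shows "ordq q (r ^ k) = int k * ordq q r"
  by (induction k) (simp_all add: ordq_1 assms ordq_mult algebra_simps)

lemma ordq_power_int: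
  assumes "prime q" "r \<noteq> 0"
  shows "ordq q (r powi k) = k * ordq q r"
  using assms by (auto simp: power_int_def ordq_power ordq_inverse)

lemma ordq_nat_eq_multiplicity_diff:
  assumes "prime p" "quotient_of r = (a, b)"
  shows "ordq (nat p) r = int (multiplicity p a) - int (multiplicity p b)"
proof -
  have "int (nat p) = p" using prime_ge_0_int[OF assms(1)] by simp
  thus ?thesis unfolding ordq_def ordz_def assms(2) by simp
qed

lemma ordz_less:
  assumes "prime q" "n \<noteq> 0" "\<bar>n\<bar> < 2 ^ k"
  shows "ordz q n < int k"
proof -
  let ?m = "multiplicity (int q) n"
  have "int q ^ ?m dvd n" by (rule multiplicity_dvd)
  hence "\<bar>int q ^ ?m\<bar> \<le> \<bar>n\<bar>" using assms(2) dvd_imp_le_int by blast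
  hence "int q ^ ?m \<le> \<bar>n\<bar>" by simp
  moreover have "(2::int) ^ ?m \<le> int q ^ ?m"
    using prime_ge_2_nat[OF assms(1)] by (intro power_mono) auto
  ultimately have "(2::int) ^ ?m < 2 ^ k" using assms(3) by linarith
  thus ?thesis unfolding ordz_def by simp
qed

text \<open>The hypothesis bounds the valuations of the reduced denominator, which therefore divides \<open>M\<close>.\<close>
lemma rat_ge_inverse_of_ordq_ge:
  fixes r :: rat and M :: int
  assumes "r > 0" "M > 0" "\<And>q. prime q \<Longrightarrow> - ordz q M \<le> ordq q r"
  shows "1 / of_int M \<le> r"
proof -
  obtain a b where qo: "quotient_of r = (a, b)" by (cases "quotient_of r") auto
  have b_pos: "b > 0" using quotient_of_denom_pos[OF qo] .
  have r_eq: "r = of_int a / of_int b" using quotient_of_div[OF qo] .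
  have a_pos: "a > 0" using assms(1) b_pos r_eq by (simp add: zero_less_divide_iff)
  have "b dvd M"
  proof (rule multiplicity_le_imp_dvd)
    show "b \<noteq> 0" using b_pos by simp
    fix p :: int assume p: "prime p"
    show "multiplicity p b \<le> multiplicity p M"
    proof (cases "p dvd b")
      case True
      with p quotient_of_coprime[OF qo] have "\<not> p dvd a"
        using coprime_common_divisor not_prime_unit by blast
      hence "multiplicity p a = 0" by (rule not_dvd_imp_multiplicity_0)
      moreover have "int (nat p) = p" using prime_ge_0_int[OF p] by simp
      ultimately show ?thesis
        using assms(3)[of "nat p"] p ordq_nat_eq_multiplicity_diff[OF p qo]
        unfolding ordz_def by simp
    qed (simp add: not_dvd_imp_multiplicity_0)
  qed
  hence "b \<le> M" using assms(2) by (simp add: zdvd_imp_le)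
  hence "1 / of_int M \<le> (1 / of_int b :: rat)" using b_pos by (intro frac_le) auto
  also have "\<dots> \<le> of_int a / of_int b" using a_pos b_pos by (intro divide_right_mono) auto
  finally show ?thesis using r_eq by simp
qed

lemma rat_eq_1_of_ordq_eq_0:
  fixes r :: rat
  assumes "r > 0" "\<And>q. prime q \<Longrightarrow> ordq q r = 0"
  shows "r = 1"
proof -
  obtain a b where qo: "quotient_of r = (a, b)" by (cases "quotient_of r") auto
  have b_pos: "b > 0" using quotient_of_denom_pos[OF qo] .
  have r_eq: "r = of_int a / of_int b" using quotient_of_div[OF qo] .
  have a_pos: "a > 0" using assms(1) b_pos r_eq by (simp add: zero_less_divide_iff)
  have "normalize a = normalize b"
  proof (rule multiplicity_eq_imp_eq)
    fix p :: int assume p: "prime p"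
    show "multiplicity p a = multiplicity p b"
      using assms(2)[of "nat p"] p ordq_nat_eq_multiplicity_diff[OF p qo] by simp
  qed (use a_pos b_pos in auto)
  hence "a = b" using a_pos b_pos by simp
  thus ?thesis using r_eq b_pos by simp
qed

lemma Tset_bounds:
  assumes "(s, t) \<in> Tset d q" "ordz q (d^2 - 1) \<le> 11" "ordz q d \<le> 11"
  shows "\<bar>s\<bar> \<le> 11 \<and> \<bar>t\<bar> \<le> 11 \<and> - (ordz q d + ordz q (d^2 - 1)) \<le> s"
proof -
  have "0 \<le> ordz q (d^2 - 1)" "0 \<le> ordz q d" by (simp_all add: ordz_def)
  with assms show ?thesis unfolding Tset_def Let_def by (auto split: if_splits)
qed

lemma Aset_ordq_bounds:
  assumes "3 \<le> d" "d \<le> 50" "(\<alpha>, \<beta>) \<in> Aset d" "prime q"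
  shows "\<bar>ordq q \<alpha>\<bar> \<le> 11 \<and> \<bar>ordq q \<beta>\<bar> \<le> 11 \<and> - ordz q (d * (d^2 - 1)) \<le> ordq q \<alpha>"
proof -
  have d_sq: "9 \<le> d^2" "d^2 \<le> 2500"
    using power_mono[of 3 d 2] power_mono[of d 50 2] assms(1,2) by auto
  have "ordz q (d^2 - 1) \<le> 11"
    using ordz_less[of q "d^2 - 1" 12] assms(4) d_sq by (simp add: abs_less_iff)
  moreover have "ordz q d \<le> 11"
    using ordz_less[of q d 12] assms(1,2,4) by (simp add: abs_less_iff)
  moreover have "ordz q (d * (d^2 - 1)) = ordz q d + ordz q (d^2 - 1)"
    unfolding ordz_def using assms d_sq by (simp add: prime_elem_multiplicity_mult_distrib)
  moreover have "(ordq q \<alpha>, ordq q \<beta>) \<in> Tset d q" using assms(3,4) unfolding Aset_def by auto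
  ultimately show ?thesis using Tset_bounds by simp
qed

lemma Aset_fst_ge:
  assumes "3 \<le> d" "d \<le> 50" "(\<alpha>, \<beta>) \<in> Aset d"
  shows "1 / 124950 \<le> \<alpha>"
proof -
  define M where "M = d * (d^2 - 1)"
  have M_le: "M \<le> 124950"
    unfolding M_def using mult_mono[of d 50 "d^2 - 1" 2499] power_mono[of d 50 2] assms(1,2) by simp
  have M_pos: "0 < M"
    unfolding M_def using power_mono[of 3 d 2] assms(1) by simp
  have "1 / of_int M \<le> \<alpha>"
    using assms(3) Aset_ordq_bounds[OF assms] M_pos unfolding M_def
    by (intro rat_ge_inverse_of_ordq_ge) (auto simp: Aset_def)
  moreover have "(1 / 124950 :: rat) \<le> 1 / of_int M"
    using M_le M_pos by (intro divide_left_mono) auto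
  ultimately show ?thesis by simp
qed

lemma Aset_ordq_ratio_bound:
  assumes "3 \<le> d" "d \<le> 50" "(\<alpha>, \<beta>) \<in> Aset d" "prime q"
  shows "\<bar>ordq q (4 * \<beta> / \<alpha>^2)\<bar> \<le> 35"
proof -
  have pos: "\<alpha> > 0" "\<beta> > 0" using assms(3) unfolding Aset_def by auto
  have "4 * \<beta> / \<alpha>^2 = of_int 4 * \<beta> * inverse \<alpha> ^ 2" by (simp add: field_simps)
  hence "ordq q (4 * \<beta> / \<alpha>^2) = ordz q 4 + ordq q \<beta> - 2 * ordq q \<alpha>"
    using assms(4) pos
    by (simp add: ordq_mult ordq_power ordq_inverse ordq_of_int del: of_int_numeral)
  moreover have "0 \<le> ordz q 4" "ordz q 4 < 3"
    using ordz_less[of q 4 3] assms(4) by (simp_all add: ordz_def)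
  ultimately show ?thesis using Aset_ordq_bounds[OF assms] unfolding abs_le_iff by linarith
qed

lemma of_rat_power_int: "(of_rat (r powi n) :: real) = of_rat r powi n"
  by (simp add: power_int_def of_rat_power of_rat_inverse)

lemma ln_power_int: "(x::real) > 0 \<Longrightarrow> ln (x powi n) = real_of_int n * ln x"
  by (simp add: powr_real_of_int'[symmetric] ln_powr)

lemma mult_indep_of_small_linear_form:
  fixes a1 a2 :: rat and C :: int and l :: nat
  defines "\<Lambda> \<equiv> ln (of_rat a1) - real l * ln (of_rat a2)"
  assumes pos: "a1 > 0" "a2 > 0"
    and val_bound: "\<And>q. prime q \<Longrightarrow> \<bar>ordq q a1\<bar> \<le> C" and "C < int l"
    and small: "\<bar>\<Lambda>\<bar> < \<bar>ln (of_rat a2)\<bar>"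
  shows "mult_indep a1 a2"
  unfolding mult_indep_def
proof (intro allI impI)
  fix m n :: int assume rel: "a1 powi m * a2 powi n = 1"
  have "a2 \<noteq> 1" using small by auto
  then obtain q where q: "prime q" "ordq q a2 \<noteq> 0"
    using rat_eq_1_of_ordq_eq_0[OF pos(2)] by blast
  have "ordq q (a1 powi m * a2 powi n) = 0" using rel ordq_1[OF q(1)] by simp
  hence "m * ordq q a1 = - (n * ordq q a2)" using q(1) pos by (simp add: ordq_mult ordq_power_int)
  hence "\<bar>n\<bar> * \<bar>ordq q a2\<bar> = \<bar>m\<bar> * \<bar>ordq q a1\<bar>" by (metis abs_minus_cancel abs_mult)
  also have "\<dots> \<le> \<bar>m\<bar> * C" using val_bound[OF q(1)] by (intro mult_left_mono) auto
  finally have "\<bar>n\<bar> * \<bar>ordq q a2\<bar> \<le> \<bar>m\<bar> * C" .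
  moreover have "\<bar>n\<bar> \<le> \<bar>n\<bar> * \<bar>ordq q a2\<bar>"
    using q(2) mult_left_mono[of 1 "\<bar>ordq q a2\<bar>" "\<bar>n\<bar>"] by linarith
  ultimately have n_bound: "\<bar>n\<bar> \<le> C * \<bar>m\<bar>" by (simp add: mult.commute)
  have "real_of_int m * ln (of_rat a1) + real_of_int n * ln (of_rat a2) = 0"
    using arg_cong[OF rel, of "\<lambda>r. ln (of_rat r :: real)"] pos
    by (simp add: of_rat_mult of_rat_power_int ln_mult ln_power_int)
  hence log_rel: "real_of_int m * \<Lambda> = - real_of_int (n + int l * m) * ln (of_rat a2)"
    unfolding \<Lambda>_def by (simp add: algebra_simps)
  have "\<bar>m\<bar> \<le> \<bar>n + int l * m\<bar>"
  proof -
    have "(C + 1) * \<bar>m\<bar> \<le> int l * \<bar>m\<bar>" using \<open>C < int l\<close> by (intro mult_right_mono) auto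
    thus ?thesis using n_bound by (simp add: abs_mult algebra_simps)
  qed
  hence "\<bar>real_of_int m\<bar> \<le> \<bar>real_of_int (n + int l * m)\<bar>" by (metis of_int_abs of_int_le_iff)
  hence "\<bar>real_of_int m\<bar> * \<bar>ln (of_rat a2)\<bar> \<le> \<bar>real_of_int (n + int l * m)\<bar> * \<bar>ln (of_rat a2)\<bar>"
    by (rule mult_right_mono) simp
  also have "\<dots> = \<bar>real_of_int m\<bar> * \<bar>\<Lambda>\<bar>"
    using log_rel by (metis abs_minus_cancel abs_mult mult_minus_left)
  finally have "\<bar>real_of_int m\<bar> * \<bar>ln (of_rat a2)\<bar> \<le> \<bar>real_of_int m\<bar> * \<bar>\<Lambda>\<bar>" .
  with small have "m = 0" by (cases "m = 0") (auto simp: mult_le_cancel_left_pos)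
  with log_rel small show "m = 0 \<and> n = 0" by auto
qed

lemma linear_form_bounds:
  fixes a b Y Z D :: real and l :: nat
  assumes "a > 0" "b > 0" "Y > 0" "Z > 0" "D > 0" "4 * b * Z ^ l - a^2 * Y ^ l = D"
  shows "0 < ln (4 * b / a^2) - real l * ln (Y / Z)"
    and "ln (4 * b / a^2) - real l * ln (Y / Z) < D / (a^2 * Y ^ l)"
proof -
  define x where "x = D / (a^2 * Y ^ l)"
  have "x > 0" unfolding x_def using assms by simp
  have "(4 * b / a^2) / (Y / Z) ^ l = (a^2 * Y ^ l + D) / (a^2 * Y ^ l)"
    using assms by (simp add: field_simps power_divide)
  also have "\<dots> = 1 + x" unfolding x_def using assms by (simp add: field_simps)
  finally have ratio: "(4 * b / a^2) / (Y / Z) ^ l = 1 + x" .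
  have "ln (4 * b / a^2) - real l * ln (Y / Z) = ln (4 * b / a^2) - ln ((Y / Z) ^ l)"
    using assms by (simp add: ln_realpow)
  also have "\<dots> = ln ((4 * b / a^2) / (Y / Z) ^ l)"
    using assms by (intro ln_divide_pos[symmetric]) auto
  also have "\<dots> = ln (1 + x)" using ratio by simp
  finally have "ln (4 * b / a^2) - real l * ln (Y / Z) = ln (1 + x)" .
  with \<open>x > 0\<close> show "0 < ln (4 * b / a^2) - real l * ln (Y / Z)"
    and "ln (4 * b / a^2) - real l * ln (Y / Z) < D / (a^2 * Y ^ l)"
    using ln_add_one_self_less_self unfolding x_def by auto
qed

lemma small_quotient_bound:
  fixes a Y D :: real
  assumes "1 / 124950 \<le> a" "4 \<le> Y" "0 < D" "D \<le> 2499" "1000 < l"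
  shows "D / (a^2 * Y ^ l) < 1 / (2 * Y)"
proof -
  have "(4::real) ^ 1000 \<le> 4 ^ (l - 1)" using assms(5) by (intro power_increasing) auto
  also have "\<dots> \<le> Y ^ (l - 1)" using assms(2) by (intro power_mono) auto
  finally have "(1 / 124950) ^ 2 * 4 ^ 1000 \<le> a^2 * Y ^ (l - 1)"
    using assms(1) by (intro mult_mono power_mono) auto
  moreover have "2 * D < (1 / 124950 :: real) ^ 2 * 4 ^ 1000"
  proof -
    have "(2 * 2499 :: real) < 4 ^ 1000 / 124950 ^ 2" by simp
    thus ?thesis using assms(4) by (simp add: power_divide)
  qed
  ultimately have "2 * D * Y < a^2 * Y ^ (l - 1) * Y" using assms(2) by simp
  also have "\<dots> = a^2 * Y ^ l" using assms(5) by (simp flip: power_Suc2)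
  finally show ?thesis using assms(1,2) by (simp add: field_simps)
qed

lemma abs_ln_divide_ge:
  fixes Y Z :: int
  assumes "Y \<ge> 1" "Z \<ge> 1" "Z \<noteq> Y"
  shows "1 / (2 * real_of_int Y) \<le> \<bar>ln (real_of_int Y / real_of_int Z)\<bar>"
proof (cases "Z > Y")
  case True
  hence "ln (real_of_int Y / real_of_int Z) \<le> ln (real_of_int Y / (real_of_int Y + 1))"
    using assms by (subst ln_le_cancel_iff) (auto intro!: divide_left_mono)
  also have "\<dots> \<le> real_of_int Y / (real_of_int Y + 1) - 1"
    using assms by (intro ln_le_minus_one) auto
  also have "\<dots> = - 1 / (real_of_int Y + 1)" using assms by (simp add: field_simps)
  also have "\<dots> \<le> - 1 / (2 * real_of_int Y)" using assms by (simp add: field_simps)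
  finally show ?thesis by linarith
next
  case False
  hence "ln (real_of_int Z / real_of_int Y) \<le> real_of_int Z / real_of_int Y - 1"
    using assms by (intro ln_le_minus_one) auto
  also have "\<dots> \<le> - 1 / real_of_int Y"
  proof -
    have "real_of_int Y * (1 + real_of_int Z) \<le> real_of_int Y * real_of_int Y"
      using assms False by (intro mult_left_mono) auto
    thus ?thesis using assms by (simp add: field_simps distrib_left)
  qed
  also have "\<dots> \<le> - 1 / (2 * real_of_int Y)" using assms by (simp add: field_simps)
  finally show ?thesis using assms by (simp add: ln_div)
qed

lemma linear_form_bounds_rat:
  fixes \<alpha> \<beta> :: rat and y1 y2 D :: int and l :: nat
  assumes "\<alpha> > 0" "\<beta> > 0" "y1 \<noteq> 0" "y2 > 0" "D > 0"
    and "4 * \<beta> * of_int y2 ^ l - \<alpha>^2 * of_int y1 ^ (2 * l) = of_int D"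
  shows "0 < ln (real_of_rat (4 * \<beta> / \<alpha>^2)) - real l * ln (real_of_rat (of_int y1 ^ 2 / of_int y2))"
    and "ln (real_of_rat (4 * \<beta> / \<alpha>^2)) - real l * ln (real_of_rat (of_int y1 ^ 2 / of_int y2))
          < real_of_int D / (real_of_rat \<alpha>^2 * real_of_int y1 ^ (2 * l))"
proof -
  have eq: "4 * of_rat \<beta> * of_int y2 ^ l - of_rat \<alpha> ^ 2 * of_int (y1^2) ^ l = (of_int D :: real)"
    using arg_cong[OF assms(6), of "real_of_rat"]
    by (simp add: of_rat_diff of_rat_mult of_rat_power power_mult)
  have real_pos: "0 < real_of_rat \<alpha>" "0 < real_of_rat \<beta>"
    "0 < real_of_int (y1^2)" "0 < real_of_int y2" "0 < real_of_int D"
    using assms(1-5) by (simp_all only: of_int_0_less_iff zero_less_of_rat_iff) simp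
  have \<alpha>1_real: "real_of_rat (4 * \<beta> / \<alpha>^2) = 4 * of_rat \<beta> / of_rat \<alpha> ^ 2"
    by (simp add: of_rat_divide of_rat_mult of_rat_power)
  have \<alpha>2_real: "real_of_rat (of_int y1 ^ 2 / of_int y2) = of_int (y1^2) / of_int y2"
    by (simp add: of_rat_divide of_rat_power)
  have y1_pow: "real_of_int y1 ^ (2 * l) = of_int (y1^2) ^ l" by (simp add: power_mult)
  show "0 < ln (real_of_rat (4 * \<beta> / \<alpha>^2)) - real l * ln (real_of_rat (of_int y1 ^ 2 / of_int y2))"
    and "ln (real_of_rat (4 * \<beta> / \<alpha>^2)) - real l * ln (real_of_rat (of_int y1 ^ 2 / of_int y2))
          < real_of_int D / (real_of_rat \<alpha>^2 * real_of_int y1 ^ (2 * l))"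
    unfolding \<alpha>1_real \<alpha>2_real y1_pow by (fact linear_form_bounds[OF real_pos eq])+
qed

lemma small_quotient_lt_abs_ln:
  fixes \<alpha> :: rat and y1 y2 D :: int and l :: nat
  assumes "1 / 124950 \<le> \<alpha>" "\<bar>y1\<bar> \<ge> 2" "y2 \<ge> 1" "y2 \<noteq> y1^2" "0 < D" "D \<le> 2499" "1000 < l"
  shows "real_of_int D / (real_of_rat \<alpha>^2 * real_of_int y1 ^ (2 * l))
          < \<bar>ln (real_of_rat (of_int y1 ^ 2 / of_int y2))\<bar>"
proof -
  have "(2::int)^2 \<le> \<bar>y1\<bar>^2" using assms(2) by (intro power_mono) auto
  hence y1_sq: "4 \<le> y1^2" by simp
  have "real_of_rat (1 / 124950) \<le> real_of_rat \<alpha>" using assms(1) by (simp only: of_rat_less_eq)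
  hence "1 / 124950 \<le> real_of_rat \<alpha>" by (simp add: of_rat_divide)
  moreover have "4 \<le> real_of_int (y1^2)" "0 < real_of_int D" "real_of_int D \<le> 2499"
    using y1_sq assms(5,6) by (metis of_int_le_iff of_int_numeral of_int_0_less_iff)+
  ultimately have "real_of_int D / (real_of_rat \<alpha>^2 * real_of_int y1 ^ (2 * l)) < 1 / (2 * of_int (y1^2))"
    using small_quotient_bound assms(7) by (simp add: power_mult)
  also have "\<dots> \<le> \<bar>ln (real_of_int (y1^2) / real_of_int y2)\<bar>"
    using y1_sq assms(3,4) by (intro abs_ln_divide_ge) auto
  finally show ?thesis by (simp add: of_rat_divide of_rat_power)
qed

theorem lemma5p2:
  fixes d :: int and \<alpha> \<beta> :: rat and l :: nat and y1 y2 :: int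
  assumes "3 \<le> d" and "d \<le> 50"
    and "(\<alpha>, \<beta>) \<in> Aset d"
    and "prime l" and "l > 1000"
    and "4 * \<beta> * of_int y2 ^ l - \<alpha>^2 * of_int y1 ^ (2 * l) = of_int (d^2 - 1)"
    and "\<bar>y1\<bar> \<ge> 2" and "y2 \<ge> 2" and "y2 \<noteq> y1^2"
  shows "4 * \<beta> / \<alpha>^2 > 0 \<and> of_int y1 ^ 2 / of_int y2 > (0::rat)
    \<and> mult_indep (4 * \<beta> / \<alpha>^2) (of_int y1 ^ 2 / of_int y2)
    \<and> 0 < ln (real_of_rat (4 * \<beta> / \<alpha>^2)) - real l * ln (real_of_rat (of_int y1 ^ 2 / of_int y2))
    \<and> ln (real_of_rat (4 * \<beta> / \<alpha>^2)) - real l * ln (real_of_rat (of_int y1 ^ 2 / of_int y2))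
        < real_of_int (d^2 - 1) / (real_of_rat \<alpha>^2 * real_of_int y1 ^ (2 * l))"
proof -
  have pos: "\<alpha> > 0" "\<beta> > 0" using assms(3) unfolding Aset_def by auto
  have y1_nz: "y1 \<noteq> 0" using assms(7) by auto
  have D_pos: "0 < d^2 - 1" and D_le: "d^2 - 1 \<le> 2499"
    using power_mono[of 3 d 2] power_mono[of d 50 2] assms(1,2) by auto
  note \<Lambda>_bounds = linear_form_bounds_rat[OF pos y1_nz _ D_pos assms(6)]
  have "real_of_int (d^2 - 1) / (real_of_rat \<alpha>^2 * real_of_int y1 ^ (2 * l))
          < \<bar>ln (real_of_rat (of_int y1 ^ 2 / of_int y2))\<bar>"
    using assms(8) by (intro small_quotient_lt_abs_ln[OF Aset_fst_ge[OF assms(1-3)] assms(7) _ assms(9)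
          D_pos D_le assms(5)]) simp
  moreover have ratios_pos: "4 * \<beta> / \<alpha>^2 > 0" "of_int y1 ^ 2 / of_int y2 > (0::rat)"
    using pos y1_nz assms(8) by simp_all
  ultimately have "mult_indep (4 * \<beta> / \<alpha>^2) (of_int y1 ^ 2 / of_int y2)"
    using \<Lambda>_bounds Aset_ordq_ratio_bound[OF assms(1-3)] assms(5,8)
    by (intro mult_indep_of_small_linear_form[where C = 35 and l = l]) auto
  with ratios_pos \<Lambda>_bounds assms(8) show ?thesis by simp
qed

end
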